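(* Let $g\colon[0,1]\to[0,1]$ be a surjection whose graph $\Gamma=\{(x,g(x))\colon x\in[0,1]\}\subseteq[0,1]^2$ (with the subspace topology of the plane) is connected. Define $f\colon\Gamma\to[0,1]$ by $f(x,g(x))=g(x)$. Then $f$ is a continuous quotient surjection of $\Gamma$ onto $[0,1]$.
   Context: A surjection $f\colon X\to Y$ is a quotient map if for every $G\subseteq Y$, $G$ is open in $Y$ iff $f^{-1}(G)$ is open in $X$. *)

theory Defs
  imports "HOL-Analysis.Analysis"
begin

end

theory Submission
  imports Defs
begin

text \<open>A connected graph has the Darboux property: if g omitted a value c strictly between
  g a and g b on [a, b], the lines x = a, x = b and y = c would cut the graph into two
  relatively open pieces. Now let the preimage of U in the graph be open, y \<in> U, and let
  values outside U accumulate at y from below. Near every point of the fibre over y the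
  function stays \<open>\<ge> y\<close>, since otherwise the Darboux property would produce a nearby point of the
  graph at a height outside U. So the half-plane below y and the union of the half-plane above y
  with thin vertical strips around the fibre disconnect the graph, unless g takes no value below
  y at all. Reflecting g handles accumulation from above, hence the second projection is a
  quotient map from any connected graph onto the range of g.\<close>

abbreviation graph_on :: "real set \<Rightarrow> (real \<Rightarrow> real) \<Rightarrow> (real \<times> real) set"
  where "graph_on A g \<equiv> (\<lambda>x. (x, g x)) ` A"

lemma connected_graph_darboux_ordered:
  assumes conn: "connected (graph_on A g)" and "a \<in> A" "b \<in> A" "a < b"
    and between: "(g a - c) * (g b - c) < 0"
  shows "\<exists>z\<in>A. g z = c \<and> a \<le> z \<and> z \<le> b"
proof (rule ccontr)
  assume no_root: "\<not> ?thesis"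
  define P where "P = {p. fst p < a \<or> fst p < b \<and> 0 < (snd p - c) * (g a - c)}"
  define Q where "Q = {p. b < fst p \<or> a < fst p \<and> (snd p - c) * (g a - c) < 0}"
  have "0 < (g a - c) * (g a - c)"
    using between by (metis mult_zero_left not_real_square_gt_zero)
  then have ends: "(a, g a) \<in> P" "(b, g b) \<in> Q"
    using \<open>a < b\<close> between by (auto simp: P_def Q_def mult.commute)
  have "open P" "open Q"
    unfolding P_def Q_def
    by (intro open_Collect_disj open_Collect_conj open_Collect_less continuous_intros)+
  moreover have "P \<inter> Q \<inter> graph_on A g = {}"
    using \<open>a < b\<close> by (auto simp: P_def Q_def)
  moreover have "graph_on A g \<subseteq> P \<union> Q"
  proof (rule image_subsetI)
    fix x assume "x \<in> A"
    consider "x < a \<or> b < x" | "x = a" | "a < x" "x \<le> b" by linarith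
    then show "(x, g x) \<in> P \<union> Q"
    proof cases
      case 3
      then have "(g x - c) * (g a - c) < 0 \<or> 0 < (g x - c) * (g a - c)"
        using no_root \<open>x \<in> A\<close> between by fastforce
      with 3 between show ?thesis
        unfolding P_def Q_def by (cases "x = b") (auto simp: mult.commute)
    qed (use ends in \<open>auto simp: P_def Q_def\<close>)
  qed
  ultimately show False
    using connectedD[OF conn] ends \<open>a \<in> A\<close> \<open>b \<in> A\<close> by blast
qed

lemma connected_graph_darboux:
  assumes conn: "connected (graph_on A g)" and "a \<in> A" "b \<in> A"
    and between: "(g a - c) * (g b - c) < 0"
  shows "\<exists>z\<in>A. g z = c \<and> min a b \<le> z \<and> z \<le> max a b"
proof (cases a b rule: linorder_cases)
  case less
  then show ?thesis
    using connected_graph_darboux_ordered[OF conn \<open>a \<in> A\<close> \<open>b \<in> A\<close> _ between] by auto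
next
  case equal
  then show ?thesis
    using between zero_le_square[of "g a - c"] by auto
next
  case greater
  then show ?thesis
    using connected_graph_darboux_ordered[OF conn \<open>b \<in> A\<close> \<open>a \<in> A\<close>, of c] between
    by (auto simp: mult.commute)
qed

lemma connected_graph_locally_above_fibre:
  assumes conn: "connected (graph_on A g)"
    and open_preimage: "\<forall>x0\<in>A. g x0 \<in> U \<longrightarrow>
      (\<exists>d>0. \<forall>x\<in>A. \<bar>x - x0\<bar> < d \<and> \<bar>g x - g x0\<bar> < d \<longrightarrow> g x \<in> U)"
    and "x0 \<in> A" "g x0 \<in> U"
    and gaps: "\<forall>e>0. \<exists>v. g x0 - e < v \<and> v < g x0 \<and> v \<notin> U"
  shows "\<exists>d>0. \<forall>x\<in>A. \<bar>x - x0\<bar> < d \<longrightarrow> g x0 \<le> g x"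
proof -
  obtain d where "d > 0" and d: "\<And>x. x \<in> A \<Longrightarrow> \<bar>x - x0\<bar> < d \<Longrightarrow> \<bar>g x - g x0\<bar> < d \<Longrightarrow> g x \<in> U"
    using open_preimage \<open>x0 \<in> A\<close> \<open>g x0 \<in> U\<close> by blast
  have "g x0 \<le> g x" if "x \<in> A" "\<bar>x - x0\<bar> < d" for x
  proof (rule ccontr)
    assume "\<not> g x0 \<le> g x"
    then obtain v where v: "g x0 - min d (g x0 - g x) < v" "v < g x0" "v \<notin> U"
      using gaps \<open>d > 0\<close> by (metis diff_gt_0_iff_gt min_less_iff_conj not_le)
    then have "(g x - v) * (g x0 - v) < 0"
      by (simp add: mult_neg_pos)
    then obtain z where "z \<in> A" "g z = v" "min x x0 \<le> z" "z \<le> max x x0"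
      using connected_graph_darboux[OF conn \<open>x \<in> A\<close> \<open>x0 \<in> A\<close>] by blast
    moreover have "\<bar>z - x0\<bar> < d"
      using \<open>\<bar>x - x0\<bar> < d\<close> \<open>min x x0 \<le> z\<close> \<open>z \<le> max x x0\<close> by linarith
    ultimately have "g z \<in> U"
      using d[of z] v min.cobounded1[of d "g x0 - g x"] by auto
    with \<open>g z = v\<close> \<open>v \<notin> U\<close> show False by simp
  qed
  with \<open>d > 0\<close> show ?thesis by blast
qed

lemma connected_graph_open_below:
  assumes conn: "connected (graph_on A g)"
    and open_preimage: "\<forall>x0\<in>A. g x0 \<in> U \<longrightarrow>
      (\<exists>d>0. \<forall>x\<in>A. \<bar>x - x0\<bar> < d \<and> \<bar>g x - g x0\<bar> < d \<longrightarrow> g x \<in> U)"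
    and "x0 \<in> A" "g x0 \<in> U"
  shows "\<exists>e>0. \<forall>v\<in>g ` A. g x0 - e < v \<and> v < g x0 \<longrightarrow> v \<in> U"
proof (rule ccontr)
  define y where "y = g x0"
  assume "\<not> ?thesis"
  then have gaps: "\<forall>e>0. \<exists>v\<in>g ` A. y - e < v \<and> v < y \<and> v \<notin> U"
    unfolding y_def by blast
  then obtain x1 where "x1 \<in> A" "g x1 < y"
    using zero_less_one by blast
  have "\<exists>d>0. \<forall>x'\<in>A. \<bar>x' - x\<bar> < d \<longrightarrow> g x \<le> g x'" if "x \<in> A" "g x = y" for x
  proof (rule connected_graph_locally_above_fibre[OF conn open_preimage \<open>x \<in> A\<close>])
    show "g x \<in> U"
      using \<open>g x0 \<in> U\<close> that(2) by (simp add: y_def)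
    show "\<forall>e>0. \<exists>v. g x - e < v \<and> v < g x \<and> v \<notin> U"
      using gaps that(2) by blast
  qed
  then obtain D where D: "\<And>x. x \<in> A \<Longrightarrow> g x = y \<Longrightarrow> D x > 0"
    "\<And>x x'. x \<in> A \<Longrightarrow> g x = y \<Longrightarrow> x' \<in> A \<Longrightarrow> \<bar>x' - x\<bar> < D x \<Longrightarrow> y \<le> g x'"
    by metis
  define P where "P = {p::real \<times> real. snd p < y}"
  define Q where "Q = {p::real \<times> real. y < snd p} \<union> (\<Union>x\<in>A \<inter> g -` {y}. {p. \<bar>fst p - x\<bar> < D x})"
  have "open P" "open Q"
    unfolding P_def Q_def by (intro open_Un open_UN ballI open_Collect_less continuous_intros)+
  moreover have "P \<inter> Q \<inter> graph_on A g = {}"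
    using D(2) by (fastforce simp: P_def Q_def)
  moreover have "graph_on A g \<subseteq> P \<union> Q"
    using D(1) by (force simp: P_def Q_def)
  moreover have "(x1, g x1) \<in> P" "(x0, g x0) \<in> Q"
    using \<open>g x1 < y\<close> D(1) \<open>x0 \<in> A\<close> by (auto simp: P_def Q_def y_def intro!: bexI[of _ x0])
  ultimately show False
    using connectedD[OF conn] \<open>x0 \<in> A\<close> \<open>x1 \<in> A\<close> by blast
qed

lemma connected_graph_uminus:
  assumes "connected (graph_on A g)"
  shows "connected (graph_on A (\<lambda>x. - g x))"
proof -
  have "graph_on A (\<lambda>x. - g x) = (\<lambda>p. (fst p, - snd p)) ` graph_on A g"
    by (simp add: image_image)
  also have "connected \<dots>"
    by (rule connected_continuous_image[OF _ assms]) (intro continuous_intros)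
  finally show ?thesis .
qed

lemma connected_graph_open_above:
  assumes conn: "connected (graph_on A g)"
    and open_preimage: "\<forall>x0\<in>A. g x0 \<in> U \<longrightarrow>
      (\<exists>d>0. \<forall>x\<in>A. \<bar>x - x0\<bar> < d \<and> \<bar>g x - g x0\<bar> < d \<longrightarrow> g x \<in> U)"
    and "x0 \<in> A" "g x0 \<in> U"
  shows "\<exists>e>0. \<forall>v\<in>g ` A. g x0 < v \<and> v < g x0 + e \<longrightarrow> v \<in> U"
proof -
  have mem_reflected: "v \<in> uminus ` U \<longleftrightarrow> - v \<in> U" for v :: real
    by force
  have "\<forall>x0\<in>A. - g x0 \<in> uminus ` U \<longrightarrow>
      (\<exists>d>0. \<forall>x\<in>A. \<bar>x - x0\<bar> < d \<and> \<bar>- g x - - g x0\<bar> < d \<longrightarrow> - g x \<in> uminus ` U)"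
    using open_preimage by (simp add: mem_reflected abs_minus_commute)
  moreover have "- g x0 \<in> uminus ` U"
    using \<open>g x0 \<in> U\<close> by (simp add: mem_reflected)
  ultimately obtain e where "e > 0"
    and below: "\<forall>v\<in>(\<lambda>x. - g x) ` A. - g x0 - e < v \<and> v < - g x0 \<longrightarrow> v \<in> uminus ` U"
    using connected_graph_open_below[OF connected_graph_uminus[OF conn]] \<open>x0 \<in> A\<close> by blast
  have "v \<in> U" if "v \<in> g ` A" "g x0 < v" "v < g x0 + e" for v
    using below[rule_format, of "- v"] that by (auto simp: mem_reflected)
  with \<open>e > 0\<close> show ?thesis
    by blast
qed

lemma openin_graph_preimage_local:
  assumes "openin (top_of_set (graph_on A g)) {p \<in> graph_on A g. snd p \<in> U}"
    and "x0 \<in> A" "g x0 \<in> U"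
  shows "\<exists>d>0. \<forall>x\<in>A. \<bar>x - x0\<bar> < d \<and> \<bar>g x - g x0\<bar> < d \<longrightarrow> g x \<in> U"
proof -
  have "(x0, g x0) \<in> {p \<in> graph_on A g. snd p \<in> U}"
    using assms(2,3) by simp
  then obtain e where "e > 0"
    and e: "\<forall>p\<in>graph_on A g. dist p (x0, g x0) < e \<longrightarrow> p \<in> {p \<in> graph_on A g. snd p \<in> U}"
    using assms(1) unfolding openin_euclidean_subtopology_iff by meson
  have "g x \<in> U" if "x \<in> A" "\<bar>x - x0\<bar> < e/2" "\<bar>g x - g x0\<bar> < e/2" for x
  proof -
    have "dist (x, g x) (x0, g x0) = norm (x - x0, g x - g x0)"
      by (simp add: dist_norm)
    also have "\<dots> \<le> norm (x - x0) + norm (g x - g x0)"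
      by (rule norm_Pair_le)
    also have "\<dots> < e"
      using that by simp
    finally show "g x \<in> U"
      using e \<open>x \<in> A\<close> by auto
  qed
  with \<open>e > 0\<close> show ?thesis
    by (metis half_gt_zero)
qed

lemma connected_graph_openin_range:
  assumes conn: "connected (graph_on A g)" and "U \<subseteq> g ` A"
    and "openin (top_of_set (graph_on A g)) {p \<in> graph_on A g. snd p \<in> U}"
  shows "openin (top_of_set (g ` A)) U"
  unfolding openin_euclidean_subtopology_iff
proof (intro conjI ballI)
  show "U \<subseteq> g ` A" by fact
  have open_preimage: "\<forall>x0\<in>A. g x0 \<in> U \<longrightarrow>
      (\<exists>d>0. \<forall>x\<in>A. \<bar>x - x0\<bar> < d \<and> \<bar>g x - g x0\<bar> < d \<longrightarrow> g x \<in> U)"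
    using openin_graph_preimage_local[OF assms(3)] by blast
  fix y
  assume "y \<in> U"
  then obtain x0 where "x0 \<in> A" "g x0 = y"
    using \<open>U \<subseteq> g ` A\<close> by auto
  obtain e1 where "e1 > 0" and below: "\<And>v. v \<in> g ` A \<Longrightarrow> y - e1 < v \<Longrightarrow> v < y \<Longrightarrow> v \<in> U"
    using connected_graph_open_below[OF conn open_preimage \<open>x0 \<in> A\<close>] \<open>g x0 = y\<close> \<open>y \<in> U\<close>
    by blast
  obtain e2 where "e2 > 0" and above: "\<And>v. v \<in> g ` A \<Longrightarrow> y < v \<Longrightarrow> v < y + e2 \<Longrightarrow> v \<in> U"
    using connected_graph_open_above[OF conn open_preimage \<open>x0 \<in> A\<close>] \<open>g x0 = y\<close> \<open>y \<in> U\<close>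
    by blast
  have "v \<in> U" if "v \<in> g ` A" "dist v y < min e1 e2" for v
    using below[OF that(1)] above[OF that(1)] \<open>y \<in> U\<close> that(2)
    by (cases v y rule: linorder_cases) (auto simp: dist_real_def)
  with \<open>e1 > 0\<close> \<open>e2 > 0\<close> show "\<exists>e>0. \<forall>v\<in>g ` A. dist v y < e \<longrightarrow> v \<in> U"
    by (intro exI[of _ "min e1 e2"]) auto
qed

lemma quotient_map_snd_connected_graph:
  assumes conn: "connected (graph_on A g)"
  shows "quotient_map (top_of_set (graph_on A g)) (top_of_set (g ` A)) snd"
  unfolding quotient_map_def
proof (intro conjI allI impI)
  show "snd ` topspace (top_of_set (graph_on A g)) = topspace (top_of_set (g ` A))"
    by (simp add: image_image)
  have continuous: "continuous_map (top_of_set (graph_on A g)) (top_of_set (g ` A)) snd"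
    using continuous_on_snd[OF continuous_on_id] by (auto simp: continuous_map_in_subtopology)
  fix U
  assume "U \<subseteq> topspace (top_of_set (g ` A))"
  then show "openin (top_of_set (graph_on A g)) {p \<in> topspace (top_of_set (graph_on A g)). snd p \<in> U}
    \<longleftrightarrow> openin (top_of_set (g ` A)) U"
    using connected_graph_openin_range[OF conn] openin_continuous_map_preimage[OF continuous]
    by auto
qed

theorem mainTheorem7:
  fixes g :: "real \<Rightarrow> real"
  assumes surj: "g ` {0..1} = {0..1}"
    and conn: "connected ((\<lambda>x. (x, g x)) ` {0..1})"
  shows "continuous_map (top_of_set ((\<lambda>x. (x, g x)) ` {0..1})) (top_of_set {0..1}) snd
       \<and> snd ` ((\<lambda>x. (x, g x)) ` {0..1}) = {0..1}
       \<and> quotient_map (top_of_set ((\<lambda>x. (x, g x)) ` {0..1})) (top_of_set {0..1}) snd"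
proof -
  have "quotient_map (top_of_set (graph_on {0..1} g)) (top_of_set {0..1}) snd"
    using quotient_map_snd_connected_graph[OF conn] surj by simp
  moreover have "snd ` graph_on {0..1} g = {0..1}"
    using surj by (simp add: image_image)
  ultimately show ?thesis
    using quotient_imp_continuous_map by blast
qed

end
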